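(* Let $\vec a\in\mathbb R^4\setminus\{0\}$, let $V(p)=\vec a+\langle\vec a,p\rangle p$ on $\mathbb H^3$, let $q\neq0$, and let $\gamma\colon I\to\mathbb H^3$ be a non-geodesic curve parametrized by arc-length which is a conformal trajectory of $V$ with torsion identically zero. Then $\langle\vec a,\gamma(s)\rangle=0$ for all $s\in I$ and $\vec a$ is space-like, i.e. $\langle\vec a,\vec a\rangle>0$.
   Context: $\mathbb R^4$ carries the Lorentzian metric $\langle\cdot,\cdot\rangle=dx^2+dy^2+dz^2-dt^2$ and $\mathbb H^3=\{p\in\mathbb R^4:\langle p,p\rangle=-1,\ t>0\}$ with the induced metric and Levi-Civita connection $\nabla$. The cross product of $u,v\in T_p\mathbb H^3$ is the unique $u\times v\in T_p\mathbb H^3$ with $\langle u\times v,w\rangle=\det(u,v,w,p)$ for all $w\in T_p\mathbb H^3$. For a fixed real $q\neq0$, a conformal trajectory of $V$ is a regular curve with $\nabla_{\gamma'}\gamma'=q\,V\times\gamma'$. Torsion is defined by the Frenet frame $T=\gamma'$, $\nabla_TT=\kappa N$ ($\kappa>0$), $B=T\times N$, $\nabla_TN=-\kappa T+\tau B$, $\nabla_TB=-\tau N$. *)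

theory Defs
  imports "HOL-Analysis.Analysis"
begin

definition lor :: "real^4 \<Rightarrow> real^4 \<Rightarrow> real" where
  "lor u v = u$1 * v$1 + u$2 * v$2 + u$3 * v$3 - u$4 * v$4"

definition in_H3 :: "real^4 \<Rightarrow> bool" where
  "in_H3 p \<longleftrightarrow> lor p p = -1 \<and> p$4 > 0"

definition tangentH3 :: "real^4 \<Rightarrow> real^4 \<Rightarrow> bool" where
  "tangentH3 p u \<longleftrightarrow> lor u p = 0"

definition rows4 :: "real^4 \<Rightarrow> real^4 \<Rightarrow> real^4 \<Rightarrow> real^4 \<Rightarrow> real^4^4" where
  "rows4 u v w p = (\<chi> i. if i = 1 then u else if i = 2 then v else if i = 3 then w else p)"

definition crossH3 :: "real^4 \<Rightarrow> real^4 \<Rightarrow> real^4 \<Rightarrow> real^4" where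
  "crossH3 p u v = (THE x. tangentH3 p x \<and>
       (\<forall>w. tangentH3 p w \<longrightarrow> lor x w = det (rows4 u v w p)))"

text \<open>Levi-Civita covariant derivative of H^3 along the curve gamma of a vector field X tangent
  along gamma: tangential projection of the ambient derivative (Gauss formula, unit normal gamma
  with lor gamma gamma = -1).\<close>
definition covD :: "(real \<Rightarrow> real^4) \<Rightarrow> (real \<Rightarrow> real^4) \<Rightarrow> real \<Rightarrow> real^4" where
  "covD \<gamma> X s = vector_derivative X (at s) + lor (vector_derivative X (at s)) (\<gamma> s) *\<^sub>R \<gamma> s"

text \<open>Frenet data of a curve gamma (assumed parametrized by arc length).\<close>
definition tangentT :: "(real \<Rightarrow> real^4) \<Rightarrow> real \<Rightarrow> real^4" where
  "tangentT \<gamma> s = vector_derivative \<gamma> (at s)"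

definition curvature :: "(real \<Rightarrow> real^4) \<Rightarrow> real \<Rightarrow> real" where
  "curvature \<gamma> s = sqrt (lor (covD \<gamma> (tangentT \<gamma>) s) (covD \<gamma> (tangentT \<gamma>) s))"

definition normalN :: "(real \<Rightarrow> real^4) \<Rightarrow> real \<Rightarrow> real^4" where
  "normalN \<gamma> s = (1 / curvature \<gamma> s) *\<^sub>R covD \<gamma> (tangentT \<gamma>) s"

definition binormalB :: "(real \<Rightarrow> real^4) \<Rightarrow> real \<Rightarrow> real^4" where
  "binormalB \<gamma> s = crossH3 (\<gamma> s) (tangentT \<gamma> s) (normalN \<gamma> s)"

text \<open>Torsion: nabla_T N = -kappa T + tau B, hence tau = lor (nabla_T N) B.\<close>
definition torsion :: "(real \<Rightarrow> real^4) \<Rightarrow> real \<Rightarrow> real" where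
  "torsion \<gamma> s = lor (covD \<gamma> (normalN \<gamma>) s) (binormalB \<gamma> s)"

end

theory Submission
  imports Defs
begin

text \<open>In the ambient space the conformal equation reads \<open>T' = \<gamma> + q X\<close>, where \<open>X = a \<times> T\<close> is
  the cross product in \<open>T\<^sub>\<gamma>\<bbbH>\<^sup>3\<close> (the component of \<open>V\<close> along \<open>\<gamma>\<close> drops out), so the principal normal
  is a multiple of \<open>X\<close>. Vanishing torsion means \<open>N'\<close> is orthogonal to the binormal \<open>B\<close>; differentiating
  \<open>\<langle>N, B(s)\<rangle> = H \<langle>X, B(s)\<rangle>\<close> at \<open>s\<close> turns this into \<open>det(a, N, B, \<gamma>) = 0\<close>, and for an orthonormal
  frame that determinant equals \<open>\<langle>a, T\<rangle>\<close>. Hence \<open>\<langle>a, T\<rangle> \<equiv> 0\<close>; differentiating once more gives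
  \<open>\<langle>a, \<gamma>\<rangle> = \<langle>a, T'\<rangle> = 0\<close>. So \<open>a\<close> is a nonzero tangent vector of \<open>\<bbbH>\<^sup>3\<close>, hence space-like.\<close>

lemma det_4:
  "det (A::'a::comm_ring_1^4^4) =
 A$1$1*A$2$2*A$3$3*A$4$4 - A$1$1*A$2$2*A$3$4*A$4$3 - A$1$1*A$2$3*A$3$2*A$4$4 + A$1$1*A$2$3*A$3$4*A$4$2 + A$1$1*A$2$4*A$3$2*A$4$3 - A$1$1*A$2$4*A$3$3*A$4$2
 - A$1$2*A$2$1*A$3$3*A$4$4 + A$1$2*A$2$1*A$3$4*A$4$3 + A$1$2*A$2$3*A$3$1*A$4$4 - A$1$2*A$2$3*A$3$4*A$4$1 - A$1$2*A$2$4*A$3$1*A$4$3 + A$1$2*A$2$4*A$3$3*A$4$1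
 + A$1$3*A$2$1*A$3$2*A$4$4 - A$1$3*A$2$1*A$3$4*A$4$2 - A$1$3*A$2$2*A$3$1*A$4$4 + A$1$3*A$2$2*A$3$4*A$4$1 + A$1$3*A$2$4*A$3$1*A$4$2 - A$1$3*A$2$4*A$3$2*A$4$1
 - A$1$4*A$2$1*A$3$2*A$4$3 + A$1$4*A$2$1*A$3$3*A$4$2 + A$1$4*A$2$2*A$3$1*A$4$3 - A$1$4*A$2$2*A$3$3*A$4$1 - A$1$4*A$2$3*A$3$1*A$4$2 + A$1$4*A$2$3*A$3$2*A$4$1"
proof -
  have f1: "finite {2::4, 3, 4}" "1 \<notin> {2::4, 3, 4}" by auto
  have f2: "finite {3::4, 4}" "2 \<notin> {3::4, 4}" by auto
  have f3: "finite {4::4}" "3 \<notin> {4::4}" by auto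
  show ?thesis
    unfolding det_def UNIV_4
    unfolding sum_over_permutations_insert[OF f1]
    unfolding sum_over_permutations_insert[OF f2]
    unfolding sum_over_permutations_insert[OF f3]
    unfolding permutes_sing
    by (simp add: sign_swap_id permutation_swap_id sign_compose permutation_compose sign_id
        swap_id_eq algebra_simps)
qed

definition det_rows4 :: "real^4 \<Rightarrow> real^4 \<Rightarrow> real^4 \<Rightarrow> real^4 \<Rightarrow> real" where
  "det_rows4 u v w p = det (rows4 u v w p)"

lemma det_rows4_expand: "det_rows4 u v w p =
 u$1 * v$2 * w$3 * p$4 - u$1 * v$2 * w$4 * p$3 - u$1 * v$3 * w$2 * p$4 + u$1 * v$3 * w$4 * p$2 + u$1 * v$4 * w$2 * p$3 - u$1 * v$4 * w$3 * p$2
 - u$2 * v$1 * w$3 * p$4 + u$2 * v$1 * w$4 * p$3 + u$2 * v$3 * w$1 * p$4 - u$2 * v$3 * w$4 * p$1 - u$2 * v$4 * w$1 * p$3 + u$2 * v$4 * w$3 * p$1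
 + u$3 * v$1 * w$2 * p$4 - u$3 * v$1 * w$4 * p$2 - u$3 * v$2 * w$1 * p$4 + u$3 * v$2 * w$4 * p$1 + u$3 * v$4 * w$1 * p$2 - u$3 * v$4 * w$2 * p$1
 - u$4 * v$1 * w$2 * p$3 + u$4 * v$1 * w$3 * p$2 + u$4 * v$2 * w$1 * p$3 - u$4 * v$2 * w$3 * p$1 - u$4 * v$3 * w$1 * p$2 + u$4 * v$3 * w$2 * p$1"
  unfolding det_rows4_def det_4 rows4_def by simp

lemma det_rows4_repeated:
  "det_rows4 u u w p = 0" "det_rows4 u v u p = 0" "det_rows4 u v w u = 0"
  "det_rows4 u v v p = 0" "det_rows4 u v w v = 0" "det_rows4 u v w w = 0"
  by (simp_all add: det_rows4_expand)

lemma det_rows4_linear2: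
  "det_rows4 u (x + y) w p = det_rows4 u x w p + det_rows4 u y w p"
  "det_rows4 u (c *\<^sub>R y) w p = c * det_rows4 u y w p"
  unfolding det_rows4_expand by (simp_all add: algebra_simps)

lemma det_rows4_add_multiple_last: "det_rows4 (u + c *\<^sub>R p) v w p = det_rows4 u v w p"
  unfolding det_rows4_expand by (simp add: algebra_simps)

lemma lor_commute: "lor u v = lor v u"
  unfolding lor_def by (simp add: algebra_simps)

lemma lor_add: "lor (x + y) w = lor x w + lor y w" "lor w (x + y) = lor w x + lor w y"
  unfolding lor_def by (simp_all add: algebra_simps)

lemma lor_diff: "lor (x - y) w = lor x w - lor y w"
  unfolding lor_def by (simp add: algebra_simps)

lemma lor_scaleR: "lor (c *\<^sub>R x) y = c * lor x y" "lor x (c *\<^sub>R y) = c * lor x y"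
  unfolding lor_def by (simp_all add: algebra_simps)

lemma lor_zero: "lor 0 x = 0" "lor x 0 = 0"
  unfolding lor_def by simp_all

text \<open>\<open>lor u v = (\<Sum>i. sgn_lor i * u$i * v$i)\<close>\<close>
definition sgn_lor :: "4 \<Rightarrow> real" where
  "sgn_lor i = (if i = 4 then -1 else 1)"

lemma axis_4_nth:
  "axis (1::4) (1::real) $ 1 = 1" "axis (1::4) (1::real) $ 2 = 0" "axis (1::4) (1::real) $ 3 = 0" "axis (1::4) (1::real) $ 4 = 0"
  "axis (2::4) (1::real) $ 1 = 0" "axis (2::4) (1::real) $ 2 = 1" "axis (2::4) (1::real) $ 3 = 0" "axis (2::4) (1::real) $ 4 = 0"
  "axis (3::4) (1::real) $ 1 = 0" "axis (3::4) (1::real) $ 2 = 0" "axis (3::4) (1::real) $ 3 = 1" "axis (3::4) (1::real) $ 4 = 0"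
  "axis (4::4) (1::real) $ 1 = 0" "axis (4::4) (1::real) $ 2 = 0" "axis (4::4) (1::real) $ 3 = 0" "axis (4::4) (1::real) $ 4 = 1"
  by (simp_all add: axis_def)

lemma lor_axis: "lor u (axis i 1) = sgn_lor i * u$i" "lor (axis i 1) u = sgn_lor i * u$i"
  using exhaust_4[of i] by (auto simp: lor_def axis_4_nth sgn_lor_def)

lemma det_mult_eq_det_lor_Gram:
  "det (M::real^4^4) * det N = - det (\<chi> i j. lor (M$i) (N$j))"
proof -
  define J :: "real^4^4" where "J = (\<chi> i j. if i = j then sgn_lor i else 0)"
  have det_J: "det J = -1"
    unfolding J_def det_4 by (simp add: sgn_lor_def)
  have "(\<chi> i j. lor (M$i) (N$j)) = M ** J ** transpose N"
    by (simp add: vec_eq_iff matrix_matrix_mult_def sum_4 transpose_def lor_def J_def sgn_lor_def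
        forall_4)
  then have "det (\<chi> i j. lor (M$i) (N$j)) = det M * det J * det N"
    by (simp add: det_mul)
  then show ?thesis
    using det_J by simp
qed

lemma tangentH3_nonpos_imp_zero:
  assumes "in_H3 p" "lor z p = 0" "lor z z \<le> 0"
  shows "z = 0"
proof -
  define S where "S = z$1 * z$1 + z$2 * z$2 + z$3 * z$3"
  define P where "P = p$1 * p$1 + p$2 * p$2 + p$3 * p$3"
  have p4: "p$4 > 0" and P: "P = p$4 * p$4 - 1"
    using assms(1) by (auto simp: in_H3_def lor_def P_def)
  have zp: "z$1 * p$1 + z$2 * p$2 + z$3 * p$3 = z$4 * p$4"
    using assms(2) by (simp add: lor_def)
  have S_le: "S \<le> z$4 * z$4"
    using assms(3) by (simp add: lor_def S_def)
  \<comment> \<open>Cauchy--Schwarz for the spatial parts, via Lagrange's identity\<close>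
  have "S * P - (z$1 * p$1 + z$2 * p$2 + z$3 * p$3)\<^sup>2
      = (z$1 * p$2 - z$2 * p$1)\<^sup>2 + (z$1 * p$3 - z$3 * p$1)\<^sup>2 + (z$2 * p$3 - z$3 * p$2)\<^sup>2"
    unfolding S_def P_def by (simp add: power2_eq_square algebra_simps)
  then have "(z$4 * p$4)\<^sup>2 \<le> S * P"
    unfolding zp by (smt (verit) zero_le_power2)
  then have "S * (p$4 * p$4) \<le> S * (p$4 * p$4) - S"
    using S_le mult_right_mono[OF S_le, of "p$4 * p$4"] P
    by (simp add: power2_eq_square algebra_simps)
  moreover have "S \<ge> 0"
    unfolding S_def by simp
  ultimately have "S = 0"
    by simp
  then have "z$1 = 0" "z$2 = 0" "z$3 = 0"
    unfolding S_def by (smt (verit) zero_le_square mult_eq_0_iff)+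
  with zp p4 show ?thesis
    by (simp add: vec_eq_iff forall_4)
qed

lemma tangentH3_spacelike:
  assumes "in_H3 p" "lor z p = 0" "z \<noteq> 0"
  shows "lor z z > 0"
  using tangentH3_nonpos_imp_zero[OF assms(1,2)] assms(3) by force

definition crossL :: "real^4 \<Rightarrow> real^4 \<Rightarrow> real^4 \<Rightarrow> real^4" where
  "crossL p u v = (\<chi> i. sgn_lor i * det_rows4 u v (axis i 1) p)"

lemma lor_crossL: "lor (crossL p u v) w = det_rows4 u v w p"
  unfolding lor_def crossL_def by (simp add: det_rows4_expand sgn_lor_def axis_4_nth algebra_simps)

lemma crossL_add_multiple: "crossL p (u + c *\<^sub>R p) v = crossL p u v"
  unfolding crossL_def det_rows4_add_multiple_last ..

lemma crossH3_eq_crossL: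
  assumes "in_H3 p"
  shows "crossH3 p u v = crossL p u v"
  unfolding crossH3_def
proof (rule the_equality)
  show "tangentH3 p (crossL p u v)
      \<and> (\<forall>w. tangentH3 p w \<longrightarrow> lor (crossL p u v) w = det (rows4 u v w p))"
    unfolding tangentH3_def by (simp add: lor_crossL det_rows4_repeated det_rows4_def[symmetric])
next
  fix x
  assume x: "tangentH3 p x \<and> (\<forall>w. tangentH3 p w \<longrightarrow> lor x w = det (rows4 u v w p))"
  let ?z = "x - crossL p u v"
  have "lor ?z p = 0"
    using x unfolding tangentH3_def by (simp add: lor_diff lor_crossL det_rows4_repeated)
  moreover from this have "lor ?z ?z = 0"
    using x unfolding tangentH3_def by (simp add: lor_diff lor_crossL det_rows4_def)
  ultimately show "x = crossL p u v"
    using tangentH3_nonpos_imp_zero[OF assms] by force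
qed

context
  fixes p T N :: "real^4"
  assumes p: "in_H3 p" and Tp: "lor T p = 0" and Np: "lor N p = 0"
    and TT: "lor T T = 1" and NN: "lor N N = 1" and NT: "lor N T = 0"
begin

private lemma orthonormal_frame_lor:
  "lor p p = -1" "lor p T = 0" "lor p N = 0" "lor T N = 0"
  "lor (crossL p T N) T = 0" "lor T (crossL p T N) = 0"
  "lor (crossL p T N) N = 0" "lor N (crossL p T N) = 0"
  "lor (crossL p T N) p = 0" "lor p (crossL p T N) = 0"
proof -
  show cross: "lor (crossL p T N) T = 0" "lor (crossL p T N) N = 0" "lor (crossL p T N) p = 0"
    by (simp_all add: lor_crossL det_rows4_repeated)
  then show "lor T (crossL p T N) = 0" "lor N (crossL p T N) = 0" "lor p (crossL p T N) = 0"
    by (metis lor_commute)+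
  show "lor p T = 0" "lor p N = 0" "lor T N = 0"
    using Tp Np NT by (metis lor_commute)+
  show "lor p p = -1"
    using p by (simp add: in_H3_def)
qed

lemma lor_crossL_orthonormal_self: "lor (crossL p T N) (crossL p T N) = 1"
proof -
  define b where "b = crossL p T N"
  define \<beta> where "\<beta> = lor b b"
  note frame = orthonormal_frame_lor[folded b_def] TT NN NT Tp Np
  have "det (\<chi> i j. lor (rows4 T N b p $ i) (rows4 T N b p $ j)) = - \<beta>"
    unfolding det_4 by (simp add: rows4_def frame \<beta>_def[symmetric])
  moreover have "det_rows4 T N b p = \<beta>"
    unfolding \<beta>_def b_def lor_crossL ..
  ultimately have \<beta>_idem: "\<beta> * \<beta> = \<beta>"
    using det_mult_eq_det_lor_Gram[of "rows4 T N b p" "rows4 T N b p"] by (simp add: det_rows4_def)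
  have "\<beta> \<noteq> 0"
  proof
    assume "\<beta> = 0"
    then have "b = 0"
      using tangentH3_nonpos_imp_zero[OF p frame(9)] \<beta>_def by force
    then have det_axis: "det_rows4 T N (axis i 1) p = 0" for i
      using lor_crossL[of p T N] by (simp add: b_def lor_def)
    \<comment> \<open>each Gram determinant of \<open>(T, N, e\<^sub>i, p)\<close> vanishes, yet their \<open>sgn_lor\<close>-weighted sum is \<open>-1\<close>\<close>
    have gram_axis: "0 = sgn_lor i - (sgn_lor i * T$i)\<^sup>2 - (sgn_lor i * N$i)\<^sup>2 + (sgn_lor i * p$i)\<^sup>2"
      for i
    proof -
      have "det (\<chi> k j. lor (rows4 T N (axis i 1) p $ k) (rows4 T N (axis i 1) p $ j))
          = - (sgn_lor i - (sgn_lor i * T$i)\<^sup>2 - (sgn_lor i * N$i)\<^sup>2 + (sgn_lor i * p$i)\<^sup>2)"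
        unfolding det_4 by (simp add: rows4_def frame lor_axis power2_eq_square algebra_simps)
      then show ?thesis
        using det_mult_eq_det_lor_Gram[of "rows4 T N (axis i 1) p" "rows4 T N (axis i 1) p"]
          det_axis[of i]
        by (simp add: det_rows4_def)
    qed
    have "(\<Sum>i\<in>UNIV. sgn_lor i *
        (sgn_lor i - (sgn_lor i * T$i)\<^sup>2 - (sgn_lor i * N$i)\<^sup>2 + (sgn_lor i * p$i)\<^sup>2)) = 1"
      using TT NN frame(1) unfolding sum_4 lor_def sgn_lor_def
      by (simp add: power2_eq_square algebra_simps)
    then show False
      using gram_axis by simp
  qed
  with \<beta>_idem show ?thesis
    unfolding \<beta>_def b_def by simp
qed

lemma det_rows4_crossL_orthonormal: "det_rows4 a N (crossL p T N) p = lor a T"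
proof -
  define b where "b = crossL p T N"
  have "det (\<chi> i j. lor (rows4 a N b p $ i) (rows4 T N b p $ j)) = - lor a T"
    unfolding det_4
    by (simp add: rows4_def orthonormal_frame_lor[folded b_def] lor_crossL_orthonormal_self[folded b_def]
        TT NN NT Tp Np)
  moreover have "det_rows4 T N b p = 1"
    using lor_crossL_orthonormal_self unfolding b_def lor_crossL .
  ultimately show ?thesis
    using det_mult_eq_det_lor_Gram[of "rows4 a N b p" "rows4 T N b p"]
    by (simp add: det_rows4_def b_def)
qed

end


lemma vec_nth_has_real_derivative:
  assumes "(F has_vector_derivative F') (at s)"
  shows "((\<lambda>t. F t $ i) has_real_derivative F' $ i) (at s)"
proof -
  have "((\<lambda>t. F t $ i) has_derivative (\<lambda>x. (x *\<^sub>R F') $ i)) (at s)"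
    using bounded_linear.has_derivative[OF bounded_linear_vec_nth
        assms[unfolded has_vector_derivative_def]] .
  moreover have "(\<lambda>x. (x *\<^sub>R F') $ i) = (*) (F' $ i)"
    by (auto simp: fun_eq_iff)
  ultimately show ?thesis
    unfolding has_field_derivative_def by simp
qed

lemma lor_has_real_derivative:
  assumes "(F has_vector_derivative F') (at s)" "(G has_vector_derivative G') (at s)"
  shows "((\<lambda>t. lor (F t) (G t)) has_real_derivative lor F' (G s) + lor (F s) G') (at s)"
  unfolding lor_def
  by (auto intro!: derivative_eq_intros vec_nth_has_real_derivative[OF assms(1)]
      vec_nth_has_real_derivative[OF assms(2)] simp: algebra_simps)

lemma det_rows4_has_real_derivative:
  assumes "(F has_vector_derivative F') (at s)" "(G has_vector_derivative G') (at s)"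
  shows "((\<lambda>t. det_rows4 u (F t) w (G t)) has_real_derivative
      det_rows4 u F' w (G s) + det_rows4 u (F s) w G') (at s)"
  unfolding det_rows4_expand
  by (auto intro!: derivative_eq_intros vec_nth_has_real_derivative[OF assms(1)]
      vec_nth_has_real_derivative[OF assms(2)] simp: algebra_simps)

lemma lor_crossL_self_real_differentiable:
  assumes "(F has_vector_derivative F') (at s)" "(G has_vector_derivative G') (at s)"
  shows "\<exists>D. ((\<lambda>t. lor (crossL (G t) u (F t)) (crossL (G t) u (F t))) has_real_derivative D) (at s)"
  unfolding lor_def crossL_def vec_lambda_beta
  by (rule exI, (rule DERIV_diff DERIV_add DERIV_cmult DERIV_mult DERIV_const
        det_rows4_has_real_derivative[OF assms])+)

lemma has_real_derivative_locally_constant_eq_0: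
  assumes "(f has_real_derivative d) (at s)" "open I" "s \<in> I" "\<And>t. t \<in> I \<Longrightarrow> f t = c"
  shows "d = 0"
proof -
  have "((\<lambda>t. c) has_real_derivative d) (at s)"
    using has_field_derivative_transform_within_open[OF assms(1-3)] assms(4) by simp
  then show ?thesis
    using DERIV_const DERIV_unique by blast
qed


locale conformal_trajectory =
  fixes a :: "real^4" and q :: real and \<gamma> :: "real \<Rightarrow> real^4" and I :: "real set"
  assumes q_nonzero: "q \<noteq> 0"
    and open_I: "open I"
    and \<gamma>_in_H3: "\<And>s. s \<in> I \<Longrightarrow> in_H3 (\<gamma> s)"
    and differentiable_\<gamma>: "\<And>s. s \<in> I \<Longrightarrow> \<gamma> differentiable (at s)"
    and differentiable_T: "\<And>s. s \<in> I \<Longrightarrow> tangentT \<gamma> differentiable (at s)"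
    and differentiable_N: "\<And>s. s \<in> I \<Longrightarrow> normalN \<gamma> differentiable (at s)"
    and arclength: "\<And>s. s \<in> I \<Longrightarrow> lor (tangentT \<gamma> s) (tangentT \<gamma> s) = 1"
    and conformal: "\<And>s. s \<in> I \<Longrightarrow> covD \<gamma> (tangentT \<gamma>) s
                      = q *\<^sub>R crossH3 (\<gamma> s) (a + lor a (\<gamma> s) *\<^sub>R \<gamma> s) (tangentT \<gamma> s)"
    and non_geodesic: "\<And>s. s \<in> I \<Longrightarrow> curvature \<gamma> s > 0"
    and torsion_zero: "\<And>s. s \<in> I \<Longrightarrow> torsion \<gamma> s = 0"
begin

abbreviation T :: "real \<Rightarrow> real^4" where "T \<equiv> tangentT \<gamma>"
abbreviation N :: "real \<Rightarrow> real^4" where "N \<equiv> normalN \<gamma>"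

definition T' :: "real \<Rightarrow> real^4" where "T' s = vector_derivative T (at s)"
definition N' :: "real \<Rightarrow> real^4" where "N' s = vector_derivative N (at s)"

definition X :: "real \<Rightarrow> real^4" where "X s = crossL (\<gamma> s) a (T s)"

text \<open>\<open>H = sgn q / |X|\<close>, so that \<open>N = H X\<close>.\<close>
definition H :: "real \<Rightarrow> real" where "H s = q / (\<bar>q\<bar> * sqrt (lor (X s) (X s)))"

lemma \<gamma>_has_vector_derivative: "s \<in> I \<Longrightarrow> (\<gamma> has_vector_derivative T s) (at s)"
  using differentiable_\<gamma> by (simp add: tangentT_def vector_derivative_works)

lemma T_has_vector_derivative: "s \<in> I \<Longrightarrow> (T has_vector_derivative T' s) (at s)"
  using differentiable_T by (simp add: T'_def vector_derivative_works)

lemma N_has_vector_derivative: "s \<in> I \<Longrightarrow> (N has_vector_derivative N' s) (at s)"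
  using differentiable_N by (simp add: N'_def vector_derivative_works)

lemma lor_\<gamma>_T:
  assumes s: "s \<in> I"
  shows "lor (\<gamma> s) (T s) = 0"
proof -
  have "lor (T s) (\<gamma> s) + lor (\<gamma> s) (T s) = 0"
    by (rule has_real_derivative_locally_constant_eq_0[OF lor_has_real_derivative
          [OF \<gamma>_has_vector_derivative[OF s] \<gamma>_has_vector_derivative[OF s]] open_I s, where c = "-1"])
      (use \<gamma>_in_H3 in \<open>simp add: in_H3_def\<close>)
  then show ?thesis
    by (simp add: lor_commute[of "T s"])
qed

lemma lor_T'_\<gamma>:
  assumes s: "s \<in> I"
  shows "lor (T' s) (\<gamma> s) = -1"
proof -
  have "lor (T' s) (\<gamma> s) + lor (T s) (T s) = 0"
    by (rule has_real_derivative_locally_constant_eq_0[OF lor_has_real_derivative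
          [OF T_has_vector_derivative[OF s] \<gamma>_has_vector_derivative[OF s]] open_I s, where c = 0])
      (simp add: lor_\<gamma>_T lor_commute[of "T _"])
  then show ?thesis
    using arclength[OF s] by simp
qed

lemma covD_T_eq: "s \<in> I \<Longrightarrow> covD \<gamma> T s = q *\<^sub>R X s"
  using conformal crossH3_eq_crossL[OF \<gamma>_in_H3] by (simp add: X_def crossL_add_multiple)

lemma T'_eq: "s \<in> I \<Longrightarrow> T' s = \<gamma> s + q *\<^sub>R X s"
  using covD_T_eq lor_T'_\<gamma> by (simp add: covD_def flip: T'_def) (simp add: algebra_simps)

lemma curvature_eq: "s \<in> I \<Longrightarrow> curvature \<gamma> s = \<bar>q\<bar> * sqrt (lor (X s) (X s))"
  by (simp add: curvature_def covD_T_eq lor_scaleR real_sqrt_mult flip: mult.assoc)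

lemma lor_X_X_pos: "s \<in> I \<Longrightarrow> lor (X s) (X s) > 0"
  using non_geodesic curvature_eq by (simp add: zero_less_mult_iff)

lemma H_nonzero: "s \<in> I \<Longrightarrow> H s \<noteq> 0"
  using lor_X_X_pos[of s] q_nonzero by (simp add: H_def)

lemma N_eq: "s \<in> I \<Longrightarrow> N s = H s *\<^sub>R X s"
  by (simp add: normalN_def covD_T_eq curvature_eq H_def)

lemma lor_X: "lor (X s) w = det_rows4 a (T s) w (\<gamma> s)"
  unfolding X_def by (rule lor_crossL)

lemma lor_N_N: "s \<in> I \<Longrightarrow> lor (N s) (N s) = 1"
  using lor_X_X_pos[of s] q_nonzero by (simp add: N_eq lor_scaleR H_def field_simps abs_mult_self_eq)

lemma lor_N_T: "s \<in> I \<Longrightarrow> lor (N s) (T s) = 0"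
  by (simp add: N_eq lor_scaleR lor_X det_rows4_repeated)

lemma lor_N_\<gamma>: "s \<in> I \<Longrightarrow> lor (N s) (\<gamma> s) = 0"
  by (simp add: N_eq lor_scaleR lor_X det_rows4_repeated)

lemma lor_T_\<gamma>: "s \<in> I \<Longrightarrow> lor (T s) (\<gamma> s) = 0"
  using lor_\<gamma>_T by (simp add: lor_commute)

lemma H_has_real_derivative:
  assumes s: "s \<in> I"
  obtains H' where "(H has_real_derivative H') (at s)"
proof -
  obtain Q' where Q': "((\<lambda>t. lor (X t) (X t)) has_real_derivative Q') (at s)"
    using lor_crossL_self_real_differentiable[OF T_has_vector_derivative[OF s]
        \<gamma>_has_vector_derivative[OF s]]
    unfolding X_def by blast
  have "((\<lambda>t. sqrt (lor (X t) (X t))) has_real_derivative inverse (sqrt (lor (X s) (X s))) / 2 * Q')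
      (at s)"
    by (rule DERIV_chain2[OF DERIV_real_sqrt[OF lor_X_X_pos[OF s]] Q'])
  from DERIV_divide[OF DERIV_const[of q] DERIV_cmult[OF this, of "\<bar>q\<bar>"]] show ?thesis
    using that lor_X_X_pos[OF s] q_nonzero unfolding H_def[abs_def] by force
qed

text \<open>Differentiating \<open>\<langle>N, b\<rangle> = H \<langle>X, b\<rangle>\<close> at a zero of \<open>\<langle>X, b\<rangle>\<close> kills the derivative of \<open>H\<close>.\<close>
lemma lor_N'_eq:
  assumes s: "s \<in> I" and b: "det_rows4 a (T s) b (\<gamma> s) = 0"
  shows "lor (N' s) b = H s * det_rows4 a (T' s) b (\<gamma> s)"
proof -
  define P where "P = (\<lambda>t. det_rows4 a (T t) b (\<gamma> t))"
  obtain H' where H': "(H has_real_derivative H') (at s)"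
    using H_has_real_derivative[OF s] .
  have "(P has_real_derivative det_rows4 a (T' s) b (\<gamma> s)) (at s)"
    using det_rows4_has_real_derivative[OF T_has_vector_derivative[OF s]
        \<gamma>_has_vector_derivative[OF s], of a b]
    by (simp add: P_def det_rows4_repeated)
  from DERIV_mult[OF H' this] have
    "((\<lambda>t. H t * P t) has_real_derivative H s * det_rows4 a (T' s) b (\<gamma> s)) (at s)"
    using b by (simp add: P_def mult.commute)
  then have "((\<lambda>t. lor (N t) b) has_real_derivative H s * det_rows4 a (T' s) b (\<gamma> s)) (at s)"
    by (rule has_field_derivative_transform_within_open[OF _ open_I s])
      (simp add: N_eq lor_scaleR lor_X P_def)
  moreover have "((\<lambda>t. lor (N t) b) has_real_derivative lor (N' s) b) (at s)"
    using lor_has_real_derivative[OF N_has_vector_derivative[OF s] has_vector_derivative_const[of b]]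
    by (simp add: lor_zero)
  ultimately show ?thesis
    using DERIV_unique by blast
qed

lemma binormalB_eq: "s \<in> I \<Longrightarrow> binormalB \<gamma> s = crossL (\<gamma> s) (T s) (N s)"
  by (simp add: binormalB_def crossH3_eq_crossL[OF \<gamma>_in_H3])

lemma lor_N'_binormalB: "s \<in> I \<Longrightarrow> lor (N' s) (binormalB \<gamma> s) = 0"
  using torsion_zero
  by (simp add: torsion_def covD_def binormalB_eq lor_add lor_scaleR lor_commute[of "\<gamma> _"]
      lor_crossL det_rows4_repeated flip: N'_def)

lemma lor_a_T:
  assumes s: "s \<in> I"
  shows "lor a (T s) = 0"
proof -
  define B where "B = crossL (\<gamma> s) (T s) (N s)"
  have "lor (N s) B = 0"
    unfolding B_def lor_commute[of "N s"] lor_crossL by (simp add: det_rows4_repeated)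
  then have "lor (X s) B = 0"
    using N_eq[OF s] H_nonzero[OF s] by (simp add: lor_scaleR)
  then have "H s * det_rows4 a (T' s) B (\<gamma> s) = 0"
    using lor_N'_eq[OF s, of B] lor_N'_binormalB[OF s] by (simp add: lor_X binormalB_eq[OF s] B_def)
  then have "q * H s * det_rows4 a (X s) B (\<gamma> s) = 0"
    by (auto simp: T'_eq[OF s] det_rows4_linear2 det_rows4_repeated)
  then have "det_rows4 a (N s) B (\<gamma> s) = 0"
    using q_nonzero H_nonzero[OF s] by (simp add: N_eq[OF s] det_rows4_linear2)
  then show ?thesis
    using det_rows4_crossL_orthonormal[OF \<gamma>_in_H3[OF s] lor_T_\<gamma>[OF s] lor_N_\<gamma>[OF s] arclength[OF s]
        lor_N_N[OF s] lor_N_T[OF s]]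
    by (simp add: B_def)
qed

lemma lor_a_\<gamma>:
  assumes s: "s \<in> I"
  shows "lor a (\<gamma> s) = 0"
proof -
  have "lor 0 (T s) + lor a (T' s) = 0"
    by (rule has_real_derivative_locally_constant_eq_0[OF lor_has_real_derivative
          [OF has_vector_derivative_const[of a] T_has_vector_derivative[OF s]] open_I s, where c = 0])
      (simp add: lor_a_T)
  moreover have "lor a (X s) = 0"
    by (simp add: lor_commute[of a] lor_X det_rows4_repeated)
  ultimately show ?thesis
    by (simp add: T'_eq[OF s] lor_add lor_scaleR lor_zero)
qed

end

theorem mainTheorem10:
  fixes a :: "real^4" and q :: real and \<gamma> :: "real \<Rightarrow> real^4" and I :: "real set"
    and V :: "real^4 \<Rightarrow> real^4"
  assumes a_nz: "a \<noteq> 0"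
    and V_def: "\<And>p. V p = a + lor a p *\<^sub>R p"
    and q_nz: "q \<noteq> 0"
    and I_interval: "is_interval I" "open I" "I \<noteq> {}"
    and in_H: "\<forall>s\<in>I. in_H3 (\<gamma> s)"
    and diff_gamma: "\<forall>s\<in>I. \<gamma> differentiable (at s)"
    and diff_T: "\<forall>s\<in>I. tangentT \<gamma> differentiable (at s)"
    and diff_N: "\<forall>s\<in>I. normalN \<gamma> differentiable (at s)"
    and arclength: "\<forall>s\<in>I. lor (tangentT \<gamma> s) (tangentT \<gamma> s) = 1"
    and conformal: "\<forall>s\<in>I. covD \<gamma> (tangentT \<gamma>) s
                        = q *\<^sub>R crossH3 (\<gamma> s) (V (\<gamma> s)) (tangentT \<gamma> s)"
    and non_geodesic: "\<forall>s\<in>I. curvature \<gamma> s > 0"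
    and torsion_zero: "\<forall>s\<in>I. torsion \<gamma> s = 0"
  shows "(\<forall>s\<in>I. lor a (\<gamma> s) = 0) \<and> lor a a > 0"
proof -
  interpret conformal_trajectory a q \<gamma> I
    using assms by unfold_locales (auto simp flip: V_def)
  obtain s where s: "s \<in> I"
    using I_interval by blast
  show ?thesis
    using lor_a_\<gamma> tangentH3_spacelike[OF \<gamma>_in_H3[OF s] lor_a_\<gamma>[OF s] a_nz] by blast
qed

end
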